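(* Let $f(x)=\sum_{i,j=1}^n a_{ij}x_ix_j$ be a real quadratic form with symmetric matrix $A=(a_{ij})$ and $\det A\ne0$. Then exactly one of the sets $C(f)$, $\mathrm{St}(f)$ is nonempty.
   Context: $H_n=\{x\in\mathbb R^n:\sum x_i=0\}$; $C(f)$ is the set of $h\in H_n\setminus\{0\}$ such that either $\partial f/\partial x_i(h)\le 0$ for all $i$ or $\partial f/\partial x_i(h)\ge 0$ for all $i$. $\mathrm{St}(f)=\{a\in\mathbb R^n: a_i>0\ \forall i,\ \partial f/\partial x_i(a)=\partial f/\partial x_j(a)\ \forall i,j\}$. *)

theory Defs
  imports "HOL-Analysis.Analysis"
begin

text \<open>Vectors in R^n are modelled as real^'n for a finite index type 'n (n = CARD('n)).\<close>

definition quad_form :: "real^'n^'n \<Rightarrow> real^'n \<Rightarrow> real" where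
  "quad_form A x = (\<Sum>i\<in>UNIV. \<Sum>j\<in>UNIV. A$i$j * x$i * x$j)"

definition partial :: "(real^'n \<Rightarrow> real) \<Rightarrow> 'n \<Rightarrow> real^'n \<Rightarrow> real" where
  "partial f i x = deriv (\<lambda>t. f (x + t *\<^sub>R axis i 1)) 0"

definition Hn :: "(real^'n) set" where
  "Hn = {x. (\<Sum>i\<in>UNIV. x$i) = 0}"

definition Cset :: "(real^'n \<Rightarrow> real) \<Rightarrow> (real^'n) set" where
  "Cset f = {h \<in> Hn - {0}. (\<forall>i. partial f i h \<le> 0) \<or> (\<forall>i. partial f i h \<ge> 0)}"

definition St :: "(real^'n \<Rightarrow> real) \<Rightarrow> (real^'n) set" where
  "St f = {a. (\<forall>i. a$i > 0) \<and> (\<forall>i j. partial f i a = partial f j a)}"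

end

theory Submission
  imports Defs
begin

(* The partial derivatives of f are the coordinates of 2Ax. With u = A^-1 (1,...,1), a point
   a > 0 lies in St(f) iff Aa is a multiple of (1,...,1), i.e. iff a is a nonzero multiple of u;
   so St(f) is nonempty iff u is strictly positive or strictly negative. For h in C(f), symmetry
   of A gives sum h = u . Ah, so C(f) is nonempty iff u is orthogonal to some nonzero y >= 0
   (namely y = Ah or -Ah), which happens iff u is neither strictly positive nor strictly negative. *)

lemma quad_form_eq_inner: "quad_form A x = x \<bullet> (A *v x)"
  by (simp add: quad_form_def inner_vec_def matrix_vector_mult_def sum_distrib_left mult_ac)

lemma inner_symmetric_matrix:
  fixes A :: "real^'n^'n"
  assumes "transpose A = A"
  shows "x \<bullet> (A *v y) = (A *v x) \<bullet> y"
  by (metis assms dot_lmul_matrix transpose_matrix_vector)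

lemma quad_form_along_line:
  fixes A :: "real^'n^'n"
  assumes "transpose A = A"
  shows "quad_form A (x + t *\<^sub>R y) = quad_form A x + 2 * t * (y \<bullet> (A *v x)) + t\<^sup>2 * quad_form A y"
proof -
  have "x \<bullet> (A *v y) = y \<bullet> (A *v x)"
    using inner_symmetric_matrix[OF assms] by (simp add: inner_commute)
  then show ?thesis
    by (simp add: quad_form_eq_inner matrix_vector_right_distrib inner_add_left inner_add_right
        algebra_simps power2_eq_square)
qed

lemma partial_quad_form:
  fixes A :: "real^'n^'n"
  assumes "transpose A = A"
  shows "partial (quad_form A) k x = 2 * (A *v x)$k"
proof -
  have "((\<lambda>t. quad_form A x + 2 * t * (axis k 1 \<bullet> (A *v x)) + t\<^sup>2 * quad_form A (axis k 1))
          has_real_derivative 2 * (A *v x)$k) (at 0)"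
    by (auto intro!: derivative_eq_intros simp: inner_axis')
  then show ?thesis
    unfolding partial_def quad_form_along_line[OF assms] by (rule DERIV_imp_deriv)
qed

lemma inner_pos_if_pos_nonneg:
  fixes a y :: "real^'n"
  assumes a: "\<forall>i. 0 < a$i" and y: "\<forall>i. 0 \<le> y$i" and "y \<noteq> 0"
  shows "0 < a \<bullet> y"
proof -
  obtain j where "y$j \<noteq> 0"
    using \<open>y \<noteq> 0\<close> by (auto simp: vec_eq_iff)
  with y have "0 < a$j * y$j"
    using a by (simp add: order_less_le)
  then show ?thesis
    unfolding inner_vec_def using a y
    by (intro sum_pos2[of UNIV j]) (auto intro: less_imp_le mult_nonneg_nonneg)
qed

lemma nonneg_orthogonal_exists_iff:
  fixes u :: "real^'n"
  shows "(\<exists>y. (\<forall>i. 0 \<le> y$i) \<and> y \<noteq> 0 \<and> u \<bullet> y = 0) \<longleftrightarrow> \<not> (\<forall>i. 0 < u$i) \<and> \<not> (\<forall>i. u$i < 0)"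
proof
  assume "\<exists>y. (\<forall>i. 0 \<le> y$i) \<and> y \<noteq> 0 \<and> u \<bullet> y = 0"
  then obtain y where "\<forall>i. 0 \<le> y$i" "y \<noteq> 0" "u \<bullet> y = 0"
    by blast
  then show "\<not> (\<forall>i. 0 < u$i) \<and> \<not> (\<forall>i. u$i < 0)"
    using inner_pos_if_pos_nonneg[of u y] inner_pos_if_pos_nonneg[of "-u" y] by auto
next
  assume mixed: "\<not> (\<forall>i. 0 < u$i) \<and> \<not> (\<forall>i. u$i < 0)"
  show "\<exists>y. (\<forall>i. 0 \<le> y$i) \<and> y \<noteq> 0 \<and> u \<bullet> y = 0"
  proof (cases "\<exists>i. u$i = 0")
    case True
    then obtain i where "u$i = 0"
      by blast
    moreover have "\<forall>k. 0 \<le> axis i (1::real) $ k"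
      by (simp add: axis_def)
    ultimately show ?thesis
      by (intro exI[of _ "axis i 1"]) (simp add: inner_axis)
  next
    case False
    with mixed obtain i j where ui: "u$i < 0" and uj: "0 < u$j"
      by (metis linorder_neqE_linordered_idom)
    then have "i \<noteq> j"
      by auto
    let ?y = "(- u$i) *\<^sub>R axis j 1 + u$j *\<^sub>R axis i (1::real)"
    have "?y$j \<noteq> 0"
      using \<open>i \<noteq> j\<close> ui by (simp add: axis_def)
    then have "?y \<noteq> 0"
      by (metis zero_index)
    moreover have "\<forall>k. 0 \<le> ?y$k"
      using ui uj by (auto simp: axis_def)
    moreover have "u \<bullet> ?y = 0"
      by (simp add: inner_add_right inner_axis algebra_simps)
    ultimately show ?thesis
      by blast
  qed
qed

lemma St_quad_form_nonempty_iff: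
  fixes A :: "real^'n^'n"
  assumes sym: "transpose A = A" and inv: "invertible A" and u: "A *v u = 1"
  shows "St (quad_form A) \<noteq> {} \<longleftrightarrow> (\<forall>i. 0 < u$i) \<or> (\<forall>i. u$i < 0)"
proof
  assume "St (quad_form A) \<noteq> {}"
  then obtain a where a_pos: "\<forall>i. 0 < a$i" and a_eq: "\<forall>i j. (A *v a)$i = (A *v a)$j"
    unfolding St_def by (auto simp: partial_quad_form[OF sym])
  obtain k :: 'n where True
    by simp
  define c where "c = (A *v a)$k"
  have "A *v a = A *v (c *\<^sub>R u)"
    using a_eq u by (simp add: vec_eq_iff c_def matrix_vector_mult_scaleR)
  then have "a = c *\<^sub>R u"
    using inj_matrix_vector_mult[OF inv] by (auto dest: injD)
  then have "\<forall>i. 0 < c * u$i"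
    using a_pos by simp
  then show "(\<forall>i. 0 < u$i) \<or> (\<forall>i. u$i < 0)"
    by (cases "0 < c") (auto simp: zero_less_mult_iff)
next
  have "(A *v (- u))$i = - (A *v u)$i" for i
    by (simp add: matrix_vector_mult_def sum_negf)
  then have "u \<in> St (quad_form A) \<or> - u \<in> St (quad_form A)"
    if "(\<forall>i. 0 < u$i) \<or> (\<forall>i. u$i < 0)"
    using that u by (auto simp: St_def partial_quad_form[OF sym])
  then show "(\<forall>i. 0 < u$i) \<or> (\<forall>i. u$i < 0) \<Longrightarrow> St (quad_form A) \<noteq> {}"
    by blast
qed

lemma Cset_quad_form_nonempty_iff:
  fixes A :: "real^'n^'n"
  assumes sym: "transpose A = A" and inv: "invertible A" and u: "A *v u = 1"
  shows "Cset (quad_form A) \<noteq> {} \<longleftrightarrow> (\<exists>y. (\<forall>i. 0 \<le> y$i) \<and> y \<noteq> 0 \<and> u \<bullet> y = 0)"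
proof -
  have coord_sum: "(\<Sum>i\<in>UNIV. h$i) = u \<bullet> (A *v h)" for h
    using inner_symmetric_matrix[OF sym, of u h] u by (simp add: inner_vec_def)
  have Cset_iff: "h \<in> Cset (quad_form A) \<longleftrightarrow>
      h \<noteq> 0 \<and> u \<bullet> (A *v h) = 0 \<and> ((\<forall>i. (A *v h)$i \<le> 0) \<or> (\<forall>i. 0 \<le> (A *v h)$i))" for h
    by (auto simp: Cset_def Hn_def partial_quad_form[OF sym] coord_sum)
  have A_nonzero: "A *v h \<noteq> 0" if "h \<noteq> 0" for h
    using inj_matrix_vector_mult[OF inv] that by (metis injD matrix_vector_mult_0_right)
  show ?thesis
  proof
    assume "Cset (quad_form A) \<noteq> {}"
    then obtain h where "h \<in> Cset (quad_form A)"
      by blast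
    then consider "h \<noteq> 0" "u \<bullet> (A *v h) = 0" "\<forall>i. (A *v h)$i \<le> 0"
      | "h \<noteq> 0" "u \<bullet> (A *v h) = 0" "\<forall>i. 0 \<le> (A *v h)$i"
      using Cset_iff by blast
    then show "\<exists>y. (\<forall>i. 0 \<le> y$i) \<and> y \<noteq> 0 \<and> u \<bullet> y = 0"
    proof cases
      case 1
      then show ?thesis
        using A_nonzero by (intro exI[of _ "- (A *v h)"]) auto
    next
      case 2
      then show ?thesis
        using A_nonzero by blast
    qed
  next
    assume "\<exists>y. (\<forall>i. 0 \<le> y$i) \<and> y \<noteq> 0 \<and> u \<bullet> y = 0"
    then obtain y where y: "\<forall>i. 0 \<le> y$i" "y \<noteq> 0" "u \<bullet> y = 0"
      by blast
    obtain h where "A *v h = y"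
      using inv unfolding invertible_def by (metis matrix_vector_mul_assoc matrix_vector_mul_lid)
    then have "h \<in> Cset (quad_form A)"
      using y Cset_iff by auto
    then show "Cset (quad_form A) \<noteq> {}"
      by blast
  qed
qed

theorem proposition2:
  fixes A :: "real^'n^'n"
  assumes "transpose A = A"
    and "det A \<noteq> 0"
  shows "(Cset (quad_form A) \<noteq> {}) \<noteq> (St (quad_form A) \<noteq> {})"
proof -
  have inv: "invertible A"
    using assms(2) invertible_det_nz by blast
  then obtain u where u: "A *v u = 1"
    unfolding invertible_def by (metis matrix_vector_mul_assoc matrix_vector_mul_lid)
  show ?thesis
    using Cset_quad_form_nonempty_iff[OF assms(1) inv u] St_quad_form_nonempty_iff[OF assms(1) inv u]
      nonneg_orthogonal_exists_iff[of u] by blast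
qed

end
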